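(* Fix an integer $k\ge3$ and consider the utility function described in the context. Suppose every $k$-star network is pairwise stable, where this ranges over all numbers of nodes $n\ge 2k$ and all allowed distributions of leaves. Then necessarily $$\gamma=0 \quad\text{and}\quad c=b_1-b_3.$$
   Context: A $k$-star network ($k\ge3$) on $n\ge 2k$ nodes consists of $k$ "center" nodes that are pairwise adjacent, forming a clique. Every other node is a leaf adjacent to exactly one center and to nothing else. Each center has at least one leaf, and the numbers of leaves of any two centers differ by at most one. Networks are finite simple undirected graphs whose vertices (nodes) are self-interested agents. Parameters: benefits $b_1>b_2>b_3>b_4>\dots>0$, where $b_i$ is the benefit a node obtains from a node at distance $i$; a link cost $c$ per immediate neighbor; and an intermediation fraction $\gamma$ with $0\le\gamma<1$. (Entry fees play no role here, since all nodes are already in the network.) Notation: $N$ is the set of nodes, $d_j$ the degree of $j$, and $l(j,w)$ the graph distance. A node $x$ is essential for a pair $y,z$ (with $x\notin\{y,z\}$) if $x$ lies on every path joining $y$ and $z$. Write $E(y,z)$ for the set of nodes essential for $y,z$ and $e(y,z)=|E(y,z)|$. Only pairs joined by a path contribute to the sums below. Utility of node $j$ in network $g$: $$u_j(g)=d_j(b_1-c)+\sum_{w\in N,\ l(j,w)>1}b_{l(j,w)}-\sum_{w\in N,\ E(j,w)\ne\emptyset}\gamma\, b_{l(j,w)}+\sum_{y,z\in N,\ j\in E(y,z)}\frac{\gamma}{e(y,z)}\,2\,b_{l(y,z)}.$$ Pairwise stability: $g$ is pairwise stable if (a) for every link $(i,j)\in g$, $u_i(g\setminus\{(i,j)\})\le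 u_i(g)$ and $u_j(g\setminus\{(i,j)\})\le u_j(g)$; and (b) for every non-link $(i,j)\notin g$, if $u_i(g\cup\{(i,j)\})>u_i(g)$ then $u_j(g\cup\{(i,j)\})<u_j(g)$. *)

theory Defs
  imports Complex_Main
begin

text \<open>Networks: nodes are the naturals {..<n}; a network is a set of ordered pairs
  (x,y) that is symmetric, irreflexive and contained in the node set.
  Benefits b i for i \<ge> 1 (b 0 is irrelevant).\<close>

definition nodes :: "nat \<Rightarrow> nat set" where
  "nodes n = {..<n}"

definition is_network :: "nat \<Rightarrow> (nat \<times> nat) set \<Rightarrow> bool" where
  "is_network n g \<longleftrightarrow> g \<subseteq> nodes n \<times> nodes n \<and> (\<forall>x y. (x,y) \<in> g \<longrightarrow> (y,x) \<in> g)
     \<and> (\<forall>x. (x,x) \<notin> g)"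

definition add_link :: "(nat \<times> nat) set \<Rightarrow> nat \<Rightarrow> nat \<Rightarrow> (nat \<times> nat) set" where
  "add_link g i j = g \<union> {(i,j),(j,i)}"

definition del_link :: "(nat \<times> nat) set \<Rightarrow> nat \<Rightarrow> nat \<Rightarrow> (nat \<times> nat) set" where
  "del_link g i j = g - {(i,j),(j,i)}"

definition degree :: "(nat \<times> nat) set \<Rightarrow> nat \<Rightarrow> nat" where
  "degree g j = card {w. (j,w) \<in> g}"

definition is_path :: "(nat \<times> nat) set \<Rightarrow> nat list \<Rightarrow> nat \<Rightarrow> nat \<Rightarrow> bool" where
  "is_path g p y z \<longleftrightarrow> p \<noteq> [] \<and> hd p = y \<and> last p = z \<and> distinct p \<and>
     (\<forall>i. Suc i < length p \<longrightarrow> (p ! i, p ! Suc i) \<in> g)"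

definition joined :: "(nat \<times> nat) set \<Rightarrow> nat \<Rightarrow> nat \<Rightarrow> bool" where
  "joined g y z \<longleftrightarrow> (\<exists>p. is_path g p y z)"

definition dist :: "(nat \<times> nat) set \<Rightarrow> nat \<Rightarrow> nat \<Rightarrow> nat" where
  "dist g y z = (LEAST m. \<exists>p. is_path g p y z \<and> length p = Suc m)"

definition essential :: "(nat \<times> nat) set \<Rightarrow> nat \<Rightarrow> nat \<Rightarrow> nat \<Rightarrow> bool" where
  "essential g x y z \<longleftrightarrow> x \<noteq> y \<and> x \<noteq> z \<and> (\<forall>p. is_path g p y z \<longrightarrow> x \<in> set p)"

definition ess_set :: "nat \<Rightarrow> (nat \<times> nat) set \<Rightarrow> nat \<Rightarrow> nat \<Rightarrow> nat set" where
  "ess_set n g y z = {x \<in> nodes n. essential g x y z}"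

text \<open>Utility of node j. The intermediation income sums over unordered pairs {y,z}
  (encoded as y < z) joined by a path.\<close>
definition utility :: "(nat \<Rightarrow> real) \<Rightarrow> real \<Rightarrow> real \<Rightarrow> nat \<Rightarrow> (nat \<times> nat) set \<Rightarrow> nat \<Rightarrow> real" where
  "utility b c \<gamma> n g j =
     real (degree g j) * (b 1 - c)
     + (\<Sum>w \<in> {w \<in> nodes n. joined g j w \<and> dist g j w > 1}. b (dist g j w))
     - (\<Sum>w \<in> {w \<in> nodes n. joined g j w \<and> ess_set n g j w \<noteq> {}}. \<gamma> * b (dist g j w))
     + (\<Sum>yz \<in> {(y,z). y \<in> nodes n \<and> z \<in> nodes n \<and> y < z \<and> joined g y z \<and> j \<in> ess_set n g y z}.
          \<gamma> / real (card (ess_set n g (fst yz) (snd yz))) * 2 * b (dist g (fst yz) (snd yz)))"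

definition pairwise_stable :: "(nat \<Rightarrow> real) \<Rightarrow> real \<Rightarrow> real \<Rightarrow> nat \<Rightarrow> (nat \<times> nat) set \<Rightarrow> bool" where
  "pairwise_stable b c \<gamma> n g \<longleftrightarrow>
     (\<forall>i j. (i,j) \<in> g \<longrightarrow>
        utility b c \<gamma> n (del_link g i j) i \<le> utility b c \<gamma> n g i \<and>
        utility b c \<gamma> n (del_link g i j) j \<le> utility b c \<gamma> n g j) \<and>
     (\<forall>i \<in> nodes n. \<forall>j \<in> nodes n. i \<noteq> j \<and> (i,j) \<notin> g \<longrightarrow>
        utility b c \<gamma> n (add_link g i j) i > utility b c \<gamma> n g i \<longrightarrow>
        utility b c \<gamma> n (add_link g i j) j < utility b c \<gamma> n g j)"

definition k_star_network :: "nat \<Rightarrow> nat \<Rightarrow> (nat \<times> nat) set \<Rightarrow> bool" where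
  "k_star_network k n g \<longleftrightarrow> n \<ge> 2 * k \<and> is_network n g \<and>
     (\<exists>C. C \<subseteq> nodes n \<and> card C = k \<and>
        (\<forall>x \<in> C. \<forall>y \<in> C. x \<noteq> y \<longrightarrow> (x,y) \<in> g) \<and>
        (\<forall>v \<in> nodes n - C. \<exists>x \<in> C. {w. (v,w) \<in> g} = {x}) \<and>
        (\<forall>x \<in> C. {v \<in> nodes n - C. (x,v) \<in> g} \<noteq> {}) \<and>
        (\<forall>x \<in> C. \<forall>y \<in> C. card {v \<in> nodes n - C. (x,v) \<in> g}
                              \<le> card {v \<in> nodes n - C. (y,v) \<in> g} + 1))"

end

theory Submission
  imports Defs
begin

(* Only one k-star network is needed: the one on n = 2k nodes in which
   every center x < k carries exactly one leaf k + x.  Two deviations from it are examined.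
   (1) Center i deletes its link to center j: stability says i does not gain, and the
       change of i's utility is at least -(b1 - c - b3 + gamma (2 b2 + b3 - 2/3 b4)).
   (2) Leaves k+i and k+j link up: by symmetry both gain at least
       b1 - c - b3 + gamma ((k-1) b2 + b3), so stability forces this quantity to be <= 0.
   Subtracting, gamma ((k-3) b2 + 2/3 b4) <= 0, hence gamma = 0 and then c = b1 - b3. *)

lemma is_path_single [simp]: "is_path g [a] y z \<longleftrightarrow> a = y \<and> a = z"
  by (auto simp: is_path_def)

lemma is_path_Nil [simp]: "\<not> is_path g [] y z"
  by (auto simp: is_path_def)

lemma is_path_Cons_Cons:
  "is_path g (a # b # p) y z \<longleftrightarrow> a = y \<and> (a, b) \<in> g \<and> a \<notin> set (b # p) \<and> is_path g (b # p) b z"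
proof -
  have "(\<forall>i. Suc i < length (a # b # p) \<longrightarrow> ((a # b # p) ! i, (a # b # p) ! Suc i) \<in> g) \<longleftrightarrow>
     (a, b) \<in> g \<and> (\<forall>i. Suc i < length (b # p) \<longrightarrow> ((b # p) ! i, (b # p) ! Suc i) \<in> g)"
    (is "?L \<longleftrightarrow> ?R")
  proof
    assume L: ?L
    show ?R
    proof (intro conjI allI impI)
      show "(a, b) \<in> g" using L[rule_format, of 0] by simp
      fix i assume "Suc i < length (b # p)"
      then show "((b # p) ! i, (b # p) ! Suc i) \<in> g" using L[rule_format, of "Suc i"] by simp
    qed
  next
    assume ?R
    then show ?L by (auto simp: nth_Cons split: nat.splits)
  qed
  then show ?thesis unfolding is_path_def by auto
qed

lemma path_relpow: "is_path g p y z \<Longrightarrow> (y, z) \<in> g ^^ (length p - 1)"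
proof (induction p arbitrary: y)
  case Nil then show ?case by simp
next
  case (Cons a p)
  show ?case
  proof (cases p)
    case Nil then show ?thesis using Cons.prems by simp
  next
    case (Cons b q)
    with Cons.prems have "a = y" "(a, b) \<in> g" "is_path g p b z" by (auto simp: is_path_Cons_Cons)
    then have "(y, z) \<in> g ^^ Suc (length p - 1)" using Cons.IH[of b] by (blast intro: relpow_Suc_I2)
    then show ?thesis using Cons by (simp del: relpow.simps)
  qed
qed

lemma path_joined: "is_path g p y z \<Longrightarrow> joined g y z"
  by (auto simp: joined_def)

lemma dist_eqI:
  assumes "is_path g p y z" "length p = Suc m" "\<And>m'. m' < m \<Longrightarrow> (y, z) \<notin> g ^^ m'"
  shows "dist g y z = m"
  unfolding dist_def
proof (rule Least_equality)
  show "\<exists>p. is_path g p y z \<and> length p = Suc m" using assms by blast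
next
  fix m' assume "\<exists>p. is_path g p y z \<and> length p = Suc m'"
  then obtain q where "is_path g q y z" "length q = Suc m'" by blast
  then have "(y, z) \<in> g ^^ m'" using path_relpow by fastforce
  then show "m \<le> m'" using assms(3) by (meson not_le)
qed

lemma shortest_path_exists:
  assumes "joined g y z"
  shows "\<exists>p. is_path g p y z \<and> length p = Suc (dist g y z)"
proof -
  obtain p where p: "is_path g p y z" using assms by (auto simp: joined_def)
  then have "length p = Suc (length p - 1)" by (cases p) auto
  with p have "\<exists>m p. is_path g p y z \<and> length p = Suc m" by blast
  then show ?thesis unfolding dist_def by (rule LeastI_ex)
qed

lemma dist_self [simp]: "dist g y y = 0"
  using dist_eqI[of g "[y]" y y 0] by simp

lemma dist_adj: "(y, z) \<in> g \<Longrightarrow> y \<noteq> z \<Longrightarrow> dist g y z = 1"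
  by (rule dist_eqI[of g "[y, z]"]) (auto simp: is_path_Cons_Cons less_Suc_eq)

lemma dist_2:
  assumes "is_path g [y, u, z] y z" "(y, z) \<notin> g"
  shows "dist g y z = 2"
  by (rule dist_eqI[OF assms(1)])
    (use assms in \<open>auto simp: less_Suc_eq numeral_eq_Suc relcomp_unfold is_path_Cons_Cons\<close>)

lemma dist_3:
  assumes "is_path g [y, u, v, z] y z" "(y, z) \<notin> g" "\<And>u. (y, u) \<in> g \<Longrightarrow> (u, z) \<notin> g"
  shows "dist g y z = 3"
  by (rule dist_eqI[OF assms(1)])
    (use assms in \<open>auto simp: less_Suc_eq numeral_eq_Suc relcomp_unfold is_path_Cons_Cons\<close>)

lemma dist_4:
  assumes "is_path g [y, u, v, w, z] y z" "(y, z) \<notin> g" "\<And>u. (y, u) \<in> g \<Longrightarrow> (u, z) \<notin> g"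
    "\<And>u v. (y, u) \<in> g \<Longrightarrow> (u, v) \<in> g \<Longrightarrow> (v, z) \<notin> g"
  shows "dist g y z = 4"
  by (rule dist_eqI[OF assms(1)])
    (use assms in \<open>auto simp: less_Suc_eq numeral_eq_Suc relcomp_unfold is_path_Cons_Cons\<close>)


(* In a symmetric network paths can be reversed, so joinedness, distance and essential
   sets do not depend on the order of the two endpoints. *)

lemma path_rev:
  assumes "sym g" "is_path g p y z"
  shows "is_path g (rev p) z y"
proof -
  have ne: "p \<noteq> []" "hd p = y" "last p = z" "distinct p"
    and E: "\<And>i. Suc i < length p \<Longrightarrow> (p ! i, p ! Suc i) \<in> g"
    using assms(2) by (auto simp: is_path_def)
  have "(rev p ! i, rev p ! Suc i) \<in> g" if i: "Suc i < length (rev p)" for i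
  proof -
    define m where "m = length p - Suc (Suc i)"
    have m: "Suc m < length p" "Suc m = length p - Suc i" using i by (auto simp: m_def)
    have "(p ! Suc m, p ! m) \<in> g" using assms(1) E[OF m(1)] by (rule symD)
    moreover have "rev p ! i = p ! Suc m" "rev p ! Suc i = p ! m"
      using i m(2) by (auto simp: rev_nth m_def)
    ultimately show ?thesis by simp
  qed
  then show ?thesis using ne by (auto simp: is_path_def hd_rev last_rev)
qed

lemma joined_sym: "sym g \<Longrightarrow> joined g y z = joined g z y"
  by (auto simp: joined_def dest: path_rev)

lemma dist_sym:
  assumes "sym g" shows "dist g y z = dist g z y"
proof -
  have "\<And>m. (\<exists>p. is_path g p y z \<and> length p = Suc m) = (\<exists>p. is_path g p z y \<and> length p = Suc m)"
    using path_rev[OF assms] by (metis length_rev)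
  then show ?thesis unfolding dist_def by simp
qed

lemma ess_set_sym:
  assumes "sym g" shows "ess_set n g y z = ess_set n g z y"
proof -
  have "\<And>x. (\<forall>p. is_path g p y z \<longrightarrow> x \<in> set p) = (\<forall>p. is_path g p z y \<longrightarrow> x \<in> set p)"
    using path_rev[OF assms] by (metis set_rev)
  then show ?thesis unfolding ess_set_def essential_def by auto
qed


lemma finite_nodes [simp]: "finite (nodes n)"
  by (simp add: nodes_def)

lemma ess_set_subset_path:
  assumes "is_path g p y z" shows "ess_set n g y z \<subseteq> set p - {y, z}"
  using assms by (auto simp: ess_set_def essential_def)

lemma ess_setI:
  assumes "x \<in> nodes n" "x \<noteq> y" "x \<noteq> z" "\<And>p. is_path g p y z \<Longrightarrow> x \<in> set p"
  shows "x \<in> ess_set n g y z"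
  using assms by (auto simp: ess_set_def essential_def)

lemma finite_ess_set [simp]: "finite (ess_set n g y z)"
  by (auto simp: ess_set_def nodes_def)

lemma ess_set_self [simp]: "ess_set n g y y = {}"
  using ess_set_subset_path[of g "[y]" y y n] by simp

lemma ess_set_adj: "(y, z) \<in> g \<Longrightarrow> ess_set n g y z = {}"
  using ess_set_subset_path[of g "[y, z]" y z n]
  by (cases "y = z") (auto simp: is_path_Cons_Cons)

lemma ess_set_two_paths:
  assumes "is_path g p y z" "is_path g q y z" "set p \<inter> set q \<subseteq> {y, z}"
  shows "ess_set n g y z = {}"
  using ess_set_subset_path[OF assms(1), of n] ess_set_subset_path[OF assms(2), of n] assms(3)
  by blast

(* A shortest path of length d has d - 1 interior nodes, which bounds the essential set. *)
lemma card_ess_set_le: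
  assumes "is_path g p y z" "length p = Suc d"
  shows "card (ess_set n g y z) \<le> d - 1"
proof (cases "y = z")
  case True then show ?thesis by simp
next
  case False
  have p: "distinct p" "y \<in> set p" "z \<in> set p"
    using assms(1) by (auto simp: is_path_def dest: hd_in_set last_in_set)
  have "card (ess_set n g y z) \<le> card (set p - {y, z})"
    by (rule card_mono) (use ess_set_subset_path[OF assms(1)] in auto)
  also have "\<dots> = d - 1"
    using p False assms(2) by (simp add: card_Diff_subset distinct_card)
  finally show ?thesis .
qed

lemma ess_set_dist:
  assumes "joined g y z" "ess_set n g y z \<noteq> {}"
  shows "2 \<le> dist g y z"
proof -
  obtain p where p: "is_path g p y z" "length p = Suc (dist g y z)"
    using shortest_path_exists[OF assms(1)] by blast
  moreover have "0 < card (ess_set n g y z)" using assms(2) by (simp add: card_gt_0_iff)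
  ultimately show ?thesis using card_ess_set_le[OF p, of n] by linarith
qed

lemma leaf_not_interior:
  assumes "sym g" "{w. (v, w) \<in> g} \<subseteq> {u}" "is_path g p y z" "v \<in> set p"
  shows "v = y \<or> v = z"
proof (rule ccontr)
  assume nv: "\<not> (v = y \<or> v = z)"
  have ne: "p \<noteq> []" "hd p = y" "last p = z" "distinct p"
    and E: "\<And>i. Suc i < length p \<Longrightarrow> (p ! i, p ! Suc i) \<in> g"
    using assms(3) by (auto simp: is_path_def)
  obtain m where m: "m < length p" "p ! m = v" using assms(4) by (metis in_set_conv_nth)
  have "m \<noteq> 0"
  proof
    assume "m = 0" then show False using m ne nv by (simp add: hd_conv_nth)
  qed
  moreover have "m \<noteq> length p - 1" using m ne nv by (auto simp: last_conv_nth)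
  ultimately obtain m' where m': "m = Suc m'" "Suc m < length p" using m by (cases m) auto
  have "(v, p ! m') \<in> g" using E[of m'] m m' assms(1) by (auto dest: symD)
  moreover have "(v, p ! Suc m) \<in> g" using E[of m] m m' by auto
  ultimately have "p ! m' = p ! Suc m" using assms(2) by auto
  then show False using ne(4) m' by (simp add: nth_eq_iff_index_eq)
qed

lemma leaf_neighbour_on_path:
  assumes "{w. (y, w) \<in> g} \<subseteq> {u}" "is_path g p y z" "y \<noteq> z"
  shows "u \<in> set p"
proof -
  have ne: "p \<noteq> []" "hd p = y" "last p = z"
    and E: "\<And>i. Suc i < length p \<Longrightarrow> (p ! i, p ! Suc i) \<in> g"
    using assms(2) by (auto simp: is_path_def)
  obtain a q where pq: "p = a # q" using ne by (cases p) auto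
  have "q \<noteq> []" using pq ne assms(3) by auto
  then have len: "2 \<le> length p" using pq by (cases q) auto
  then have "(p ! 0, p ! 1) \<in> g" using E[of 0] by auto
  moreover have "p ! 0 = y" using ne by (simp add: hd_conv_nth)
  ultimately have "p ! 1 = u" using assms(1) by auto
  then show ?thesis using len by (metis nth_mem One_nat_def Suc_1 Suc_le_lessD)
qed

lemma leaf_neighbour_essential:
  assumes "{x. (v, x) \<in> g} \<subseteq> {u}" "u \<in> nodes n" "u \<noteq> v" "w \<noteq> u" "w \<noteq> v"
  shows "u \<in> ess_set n g v w"
  by (rule ess_setI) (use assms leaf_neighbour_on_path[OF assms(1)] in auto)

lemma leaf_neighbour_essential':
  assumes "sym g" "{x. (v, x) \<in> g} \<subseteq> {u}" "u \<in> nodes n" "u \<noteq> v" "w \<noteq> u" "w \<noteq> v"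
  shows "u \<in> ess_set n g w v"
  using leaf_neighbour_essential[OF assms(2-6)] ess_set_sym[OF assms(1)] by simp


(* Benefit from a node at distance at least 2 (direct neighbours are paid via the degree). *)
definition far_benefit :: "(nat \<Rightarrow> real) \<Rightarrow> (nat \<times> nat) set \<Rightarrow> nat \<Rightarrow> nat \<Rightarrow> real" where
  "far_benefit b g a w = (if joined g a w \<and> 1 < dist g a w then b (dist g a w) else 0)"

definition intermediation_cost ::
    "(nat \<Rightarrow> real) \<Rightarrow> real \<Rightarrow> nat \<Rightarrow> (nat \<times> nat) set \<Rightarrow> nat \<Rightarrow> nat \<Rightarrow> real" where
  "intermediation_cost b \<gamma> n g a w =
     (if joined g a w \<and> ess_set n g a w \<noteq> {} then \<gamma> * b (dist g a w) else 0)"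

definition broker_share :: "(nat \<Rightarrow> real) \<Rightarrow> real \<Rightarrow> nat \<Rightarrow> (nat \<times> nat) set \<Rightarrow> nat \<Rightarrow> nat \<Rightarrow> real" where
  "broker_share b \<gamma> n g a w = \<gamma> / real (card (ess_set n g a w)) * 2 * b (dist g a w)"

definition brokered_pairs :: "nat \<Rightarrow> (nat \<times> nat) set \<Rightarrow> nat \<Rightarrow> (nat \<times> nat) set" where
  "brokered_pairs n g j =
     {(y, z). y \<in> nodes n \<and> z \<in> nodes n \<and> y < z \<and> joined g y z \<and> j \<in> ess_set n g y z}"

definition intermediation_income :: "(nat \<Rightarrow> real) \<Rightarrow> real \<Rightarrow> nat \<Rightarrow> (nat \<times> nat) set \<Rightarrow> nat \<Rightarrow> real" where
  "intermediation_income b \<gamma> n g j = (\<Sum>yz \<in> brokered_pairs n g j. broker_share b \<gamma> n g (fst yz) (snd yz))"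

definition fee :: "(nat \<Rightarrow> real) \<Rightarrow> real \<Rightarrow> nat \<Rightarrow> (nat \<times> nat) set \<Rightarrow> nat \<Rightarrow> nat \<Rightarrow> nat \<Rightarrow> real" where
  "fee b \<gamma> n g j a w = (if joined g a w \<and> j \<in> ess_set n g a w then broker_share b \<gamma> n g a w else 0)"

lemma utility_decomposition:
  "utility b c \<gamma> n g j = real (degree g j) * (b 1 - c) + (\<Sum>w \<in> nodes n. far_benefit b g j w)
     - (\<Sum>w \<in> nodes n. intermediation_cost b \<gamma> n g j w) + intermediation_income b \<gamma> n g j"
  unfolding utility_def far_benefit_def intermediation_cost_def intermediation_income_def
    brokered_pairs_def broker_share_def
  by (simp add: sum.inter_filter)

lemma far_benefit_path: "is_path g p a w \<Longrightarrow> 1 < dist g a w \<Longrightarrow> far_benefit b g a w = b (dist g a w)"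
  by (auto simp: far_benefit_def dest: path_joined)

lemma far_benefit_2:
  assumes "is_path g [y, u, z] y z" "(y, z) \<notin> g"
  shows "far_benefit b g y z = b 2"
  using far_benefit_path[OF assms(1)] dist_2[OF assms] by simp

lemma far_benefit_3:
  assumes "is_path g [y, u, v, z] y z" "(y, z) \<notin> g" "\<And>u. (y, u) \<in> g \<Longrightarrow> (u, z) \<notin> g"
  shows "far_benefit b g y z = b 3"
  using far_benefit_path[OF assms(1)] dist_3[OF assms] by simp

lemma far_benefit_adj: "(a, w) \<in> g \<Longrightarrow> a \<noteq> w \<Longrightarrow> far_benefit b g a w = 0"
  by (simp add: far_benefit_def dist_adj)

lemma far_benefit_self: "far_benefit b g a a = 0"
  by (simp add: far_benefit_def)

lemma intermediation_cost_free: "ess_set n g a w = {} \<Longrightarrow> intermediation_cost b \<gamma> n g a w = 0"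
  by (simp add: intermediation_cost_def)

lemma fee_zero: "ess_set n g a w = {} \<Longrightarrow> fee b \<gamma> n g j a w = 0"
  by (simp add: fee_def)

(* A leaf brokers no pair, since it is interior to no path. *)
lemma leaf_brokers_nothing:
  assumes "sym g" "{w. (v, w) \<in> g} \<subseteq> {u}"
  shows "intermediation_income b \<gamma> n g v = 0"
proof -
  have "brokered_pairs n g v = {}"
  proof (rule ccontr)
    assume "brokered_pairs n g v \<noteq> {}"
    then obtain y z where yz: "joined g y z" "v \<in> ess_set n g y z" by (auto simp: brokered_pairs_def)
    then obtain p where p: "is_path g p y z" by (auto simp: joined_def)
    have "v \<in> set p" "v \<noteq> y" "v \<noteq> z" using yz p by (auto simp: ess_set_def essential_def)
    then show False using leaf_not_interior[OF assms p] by auto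
  qed
  then show ?thesis by (simp add: intermediation_income_def)
qed

lemma brokered_pairs_at:
  assumes "sym g" "a \<in> nodes n"
  shows "{yz \<in> brokered_pairs n g j. fst yz = a \<or> snd yz = a}
       = (\<lambda>w. (min a w, max a w)) ` {w \<in> nodes n. joined g a w \<and> j \<in> ess_set n g a w}"
    (is "?P = ?h ` ?W")
proof
  show "?P \<subseteq> ?h ` ?W"
  proof clarify
    fix y z assume "(y, z) \<in> brokered_pairs n g j" "fst (y, z) = a \<or> snd (y, z) = a"
    then have H: "y \<in> nodes n" "z \<in> nodes n" "y < z" "joined g y z" "j \<in> ess_set n g y z" "y = a \<or> z = a"
      by (auto simp: brokered_pairs_def)
    show "(y, z) \<in> ?h ` ?W"
    proof (cases "y = a")
      case True then show ?thesis using H by (intro image_eqI[of _ _ z]) auto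
    next
      case False then show ?thesis using H joined_sym[OF assms(1), of y z] ess_set_sym[OF assms(1), of n y z]
        by (intro image_eqI[of _ _ y]) auto
    qed
  qed
next
  show "?h ` ?W \<subseteq> ?P"
  proof
    fix x assume "x \<in> ?h ` ?W"
    then obtain w where w: "w \<in> nodes n" "joined g a w" "j \<in> ess_set n g a w" and x: "x = ?h w"
      by blast
    then have "w \<noteq> a" by auto
    then show "x \<in> ?P"
      using w x assms joined_sym[OF assms(1), of a w] ess_set_sym[OF assms(1), of n a w]
      by (cases "a < w") (auto simp: brokered_pairs_def min_def max_def)
  qed
qed

lemma intermediation_income_split:
  assumes "sym g" "a \<in> nodes n"
  shows "intermediation_income b \<gamma> n g j = (\<Sum>w \<in> nodes n. fee b \<gamma> n g j a w)
     + (\<Sum>yz \<in> {yz \<in> brokered_pairs n g j. fst yz \<noteq> a \<and> snd yz \<noteq> a}. broker_share b \<gamma> n g (fst yz) (snd yz))"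
proof -
  let ?W = "{w \<in> nodes n. joined g a w \<and> j \<in> ess_set n g a w}"
  let ?h = "\<lambda>w. (min a w, max a w)"
  let ?F = "\<lambda>yz. broker_share b \<gamma> n g (fst yz) (snd yz)"
  have fin: "finite (brokered_pairs n g j)"
    by (rule finite_subset[of _ "nodes n \<times> nodes n"]) (auto simp: brokered_pairs_def)
  have inj: "inj_on ?h ?W"
    by (rule inj_onI) (auto simp: min_def max_def split: if_splits)
  have share_sym: "\<And>w. broker_share b \<gamma> n g (min a w) (max a w) = broker_share b \<gamma> n g a w"
    using dist_sym[OF assms(1)] ess_set_sym[OF assms(1)] by (auto simp: broker_share_def min_def max_def)
  have "(\<Sum>yz \<in> {yz \<in> brokered_pairs n g j. fst yz = a \<or> snd yz = a}. ?F yz) = (\<Sum>w \<in> ?W. broker_share b \<gamma> n g a w)"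
    unfolding brokered_pairs_at[OF assms] by (simp add: sum.reindex[OF inj] share_sym)
  also have "\<dots> = (\<Sum>w \<in> nodes n. fee b \<gamma> n g j a w)"
    unfolding fee_def by (simp add: sum.inter_filter)
  moreover
  have parts: "brokered_pairs n g j = {yz \<in> brokered_pairs n g j. fst yz = a \<or> snd yz = a}
      \<union> {yz \<in> brokered_pairs n g j. fst yz \<noteq> a \<and> snd yz \<noteq> a}" by blast
  have "(\<Sum>yz \<in> {yz \<in> brokered_pairs n g j. fst yz = a \<or> snd yz = a}
      \<union> {yz \<in> brokered_pairs n g j. fst yz \<noteq> a \<and> snd yz \<noteq> a}. ?F yz)
      = (\<Sum>yz \<in> {yz \<in> brokered_pairs n g j. fst yz = a \<or> snd yz = a}. ?F yz)
        + (\<Sum>yz \<in> {yz \<in> brokered_pairs n g j. fst yz \<noteq> a \<and> snd yz \<noteq> a}. ?F yz)"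
    by (rule sum.union_disjoint) (use fin in auto)
  then have "intermediation_income b \<gamma> n g j
      = (\<Sum>yz \<in> {yz \<in> brokered_pairs n g j. fst yz = a \<or> snd yz = a}. ?F yz)
        + (\<Sum>yz \<in> {yz \<in> brokered_pairs n g j. fst yz \<noteq> a \<and> snd yz \<noteq> a}. ?F yz)"
    unfolding intermediation_income_def by (simp only: parts[symmetric])
  ultimately show ?thesis by simp
qed

locale positive_benefits =
  fixes b :: "nat \<Rightarrow> real" and \<gamma> :: real
  assumes b_pos: "\<And>i. 1 \<le> i \<Longrightarrow> 0 < b i" and gamma_nonneg: "0 \<le> \<gamma>"
begin

lemma far_benefit_nonneg: "0 \<le> far_benefit b g a w"
  using b_pos[of "dist g a w"] by (auto simp: far_benefit_def)

lemma intermediation_cost_nonneg: "0 \<le> intermediation_cost b \<gamma> n g a w"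
proof (cases "joined g a w \<and> ess_set n g a w \<noteq> {}")
  case True
  then have "0 < b (dist g a w)" using ess_set_dist[of g a w n] b_pos by auto
  then show ?thesis using True gamma_nonneg by (simp add: intermediation_cost_def)
qed (auto simp: intermediation_cost_def)

lemma intermediation_cost_cases:
  "intermediation_cost b \<gamma> n g a w = 0 \<or>
   intermediation_cost b \<gamma> n g a w = \<gamma> * far_benefit b g a w"
proof (cases "joined g a w \<and> ess_set n g a w \<noteq> {}")
  case True
  then have "1 < dist g a w" using ess_set_dist[of g a w n] by auto
  then show ?thesis using True by (simp add: intermediation_cost_def far_benefit_def)
qed (auto simp: intermediation_cost_def)

lemma intermediation_cost_le: "intermediation_cost b \<gamma> n g a w \<le> \<gamma> * far_benefit b g a w"
  using intermediation_cost_cases[of n g a w] far_benefit_nonneg[of g a w] gamma_nonneg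
  by auto

lemma intermediation_cost_ge:
  assumes "joined g a w \<Longrightarrow> 1 < dist g a w \<Longrightarrow> ess_set n g a w \<noteq> {}"
  shows "\<gamma> * far_benefit b g a w \<le> intermediation_cost b \<gamma> n g a w"
proof (cases "joined g a w \<and> 1 < dist g a w")
  case True
  then show ?thesis using assms by (simp add: intermediation_cost_def far_benefit_def)
next
  case False
  then show ?thesis using intermediation_cost_nonneg[of n g a w] by (auto simp: far_benefit_def)
qed

lemma total_intermediation_cost_le:
  "(\<Sum>w \<in> A. intermediation_cost b \<gamma> n g a w) \<le> \<gamma> * (\<Sum>w \<in> A. far_benefit b g a w)"
  unfolding sum_distrib_left by (rule sum_mono) (rule intermediation_cost_le)

lemma leaf_intermediation_cost:
  assumes "{x. (v, x) \<in> g} = {u}" "u \<in> nodes n" "u \<noteq> v"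
  shows "intermediation_cost b \<gamma> n g v w = \<gamma> * far_benefit b g v w"
proof (rule antisym[OF intermediation_cost_le intermediation_cost_ge])
  assume "joined g v w" "1 < dist g v w"
  moreover have "dist g v u = 1" using assms by (intro dist_adj) auto
  ultimately have "w \<noteq> u" "w \<noteq> v" by auto
  then show "ess_set n g v w \<noteq> {}" using leaf_neighbour_essential[of v g u n w] assms by auto
qed

lemma broker_share_nonneg:
  "joined g a w \<Longrightarrow> ess_set n g a w \<noteq> {} \<Longrightarrow> 0 \<le> broker_share b \<gamma> n g a w"
  unfolding broker_share_def using ess_set_dist[of g a w n] b_pos[of "dist g a w"] gamma_nonneg by auto

lemma fee_nonneg: "0 \<le> fee b \<gamma> n g j a w"
  unfolding fee_def using broker_share_nonneg[of g a w n] by auto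

lemma intermediation_income_nonneg: "0 \<le> intermediation_income b \<gamma> n g j"
  unfolding intermediation_income_def
  by (rule sum_nonneg) (auto simp: brokered_pairs_def intro!: broker_share_nonneg)

lemma intermediation_income_ge:
  assumes "sym g" "a \<in> nodes n"
  shows "(\<Sum>w \<in> nodes n. fee b \<gamma> n g j a w) \<le> intermediation_income b \<gamma> n g j"
proof -
  have "0 \<le> (\<Sum>yz \<in> {yz \<in> brokered_pairs n g j. fst yz \<noteq> a \<and> snd yz \<noteq> a}. broker_share b \<gamma> n g (fst yz) (snd yz))"
    by (rule sum_nonneg) (auto simp: brokered_pairs_def intro!: broker_share_nonneg)
  then show ?thesis using intermediation_income_split[OF assms] by simp
qed

lemma intermediation_income_eq:
  assumes "sym g" "a \<in> nodes n" "\<And>y z. (y, z) \<in> brokered_pairs n g j \<Longrightarrow> y = a \<or> z = a"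
  shows "intermediation_income b \<gamma> n g j = (\<Sum>w \<in> nodes n. fee b \<gamma> n g j a w)"
proof -
  have none: "{yz \<in> brokered_pairs n g j. fst yz \<noteq> a \<and> snd yz \<noteq> a} = {}" using assms(3) by auto
  show ?thesis using intermediation_income_split[OF assms(1,2), of b \<gamma> j] unfolding none by simp
qed

lemma fee_le:
  assumes "finite A" "A \<noteq> {}" "dist g a w = d" "1 \<le> d"
    and "j \<in> ess_set n g a w \<Longrightarrow> A \<subseteq> ess_set n g a w"
  shows "fee b \<gamma> n g j a w \<le> \<gamma> / real (card A) * 2 * b d"
proof -
  have pos: "0 < b d" "0 < card A" using b_pos assms(1,2,4) by (auto simp: card_gt_0_iff)
  show ?thesis
  proof (cases "joined g a w \<and> j \<in> ess_set n g a w")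
    case True
    then have "card A \<le> card (ess_set n g a w)" using assms(5) by (intro card_mono) auto
    then have "\<gamma> / real (card (ess_set n g a w)) \<le> \<gamma> / real (card A)"
      using pos gamma_nonneg by (intro divide_left_mono) auto
    then have "\<gamma> / real (card (ess_set n g a w)) * (2 * b d) \<le> \<gamma> / real (card A) * (2 * b d)"
      using pos by (intro mult_right_mono) auto
    then show ?thesis using True assms(3) by (simp add: fee_def broker_share_def mult.assoc)
  next
    case False
    have "0 \<le> \<gamma> / real (card A) * 2 * b d" using pos gamma_nonneg by simp
    then show ?thesis using False by (auto simp: fee_def)
  qed
qed

(* Along a shortest path of length d, j shares the rent with at most d - 2 other nodes. *)
lemma fee_ge:
  assumes "is_path g p a w" "length p = Suc d" "dist g a w = d" "j \<in> ess_set n g a w"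
  shows "\<gamma> / real (d - 1) * 2 * b d \<le> fee b \<gamma> n g j a w"
proof -
  have card: "0 < card (ess_set n g a w)" "card (ess_set n g a w) \<le> d - 1"
    using assms(4) card_ess_set_le[OF assms(1,2)] by (auto simp: card_gt_0_iff)
  then have "0 < b d" using b_pos by auto
  moreover have "\<gamma> / real (d - 1) \<le> \<gamma> / real (card (ess_set n g a w))"
    using card gamma_nonneg by (intro divide_left_mono) auto
  ultimately have "\<gamma> / real (d - 1) * (2 * b d) \<le> \<gamma> / real (card (ess_set n g a w)) * (2 * b d)"
    by (intro mult_right_mono) auto
  then show ?thesis
    using assms path_joined[OF assms(1)] by (simp add: fee_def broker_share_def mult.assoc)
qed

end


(* Sums over the node set of the star network on 2k nodes, grouped into the centers i, j,
   their leaves k+i, k+j, and the k - 2 remaining center-leaf pairs. *)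

lemma sum_star_nodes:
  assumes "i < k" "j < k" "i \<noteq> j"
  shows "(\<Sum>w \<in> nodes (2*k). F w) = F i + F j + F (k+i) + F (k+j) + (\<Sum>z \<in> {..<k} - {i, j}. F z + F (k+z))"
proof -
  have N: "nodes (2*k) = {..<k} \<union> (\<lambda>z. k + z) ` {..<k}"
  proof
    show "nodes (2*k) \<subseteq> {..<k} \<union> (\<lambda>z. k + z) ` {..<k}"
    proof
      fix w assume w: "w \<in> nodes (2*k)"
      show "w \<in> {..<k} \<union> (\<lambda>z. k + z) ` {..<k}"
      proof (cases "w < k")
        case False then have "w = k + (w - k)" "w - k < k" using w by (auto simp: nodes_def)
        then show ?thesis by (metis UnI2 image_eqI lessThan_iff)
      qed simp
    qed
  qed (auto simp: nodes_def)
  have "(\<Sum>w \<in> nodes (2*k). F w) = (\<Sum>z<k. F z + F (k+z))"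
    unfolding N by (subst sum.union_disjoint) (auto simp: sum.reindex sum.distrib)
  also have "\<dots> = (F i + F (k+i)) + ((F j + F (k+j)) + (\<Sum>z \<in> {..<k} - {i} - {j}. F z + F (k+z)))"
    using assms by (simp add: sum.remove[of _ i] sum.remove[of _ j])
  also have "{..<k} - {i} - {j} = {..<k} - {i, j}" by auto
  finally show ?thesis by (simp add: add_ac)
qed

lemma card_other_centers: "i < k \<Longrightarrow> j < k \<Longrightarrow> i \<noteq> j \<Longrightarrow> card ({..<k} - {i, j}) = k - 2"
  by (subst card_Diff_subset) auto

lemma sum_star_nodes_le:
  assumes "i < k" "j < k" "i \<noteq> j"
    and "F i \<le> A1" "F j \<le> A2" "F (k+i) \<le> A3" "F (k+j) \<le> A4"
    and "\<And>z. z < k \<Longrightarrow> z \<noteq> i \<Longrightarrow> z \<noteq> j \<Longrightarrow> F z \<le> A5"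
    and "\<And>z. z < k \<Longrightarrow> z \<noteq> i \<Longrightarrow> z \<noteq> j \<Longrightarrow> F (k+z) \<le> A6"
  shows "(\<Sum>w \<in> nodes (2*k). F w) \<le> A1 + A2 + A3 + A4 + (real k - 2) * (A5 + A6)"
proof -
  have "(\<Sum>z \<in> {..<k} - {i, j}. F z + F (k+z)) \<le> (\<Sum>z \<in> {..<k} - {i, j}. A5 + A6)"
    by (rule sum_mono) (auto intro: add_mono assms)
  also have "\<dots> = (real k - 2) * (A5 + A6)"
    using card_other_centers[OF assms(1-3)] assms(1-3) by (simp add: of_nat_diff)
  finally show ?thesis using sum_star_nodes[OF assms(1-3), of F] assms(4-7) by linarith
qed

lemma sum_star_nodes_ge:
  assumes "i < k" "j < k" "i \<noteq> j"
    and "A1 \<le> F i" "A2 \<le> F j" "A3 \<le> F (k+i)" "A4 \<le> F (k+j)"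
    and "\<And>z. z < k \<Longrightarrow> z \<noteq> i \<Longrightarrow> z \<noteq> j \<Longrightarrow> A5 \<le> F z"
    and "\<And>z. z < k \<Longrightarrow> z \<noteq> i \<Longrightarrow> z \<noteq> j \<Longrightarrow> A6 \<le> F (k+z)"
  shows "A1 + A2 + A3 + A4 + (real k - 2) * (A5 + A6) \<le> (\<Sum>w \<in> nodes (2*k). F w)"
  using sum_star_nodes_le[OF assms(1-3), of "\<lambda>w. - F w" "- A1" "- A2" "- A3" "- A4" "- A5" "- A6"] assms
  by (simp add: sum_negf algebra_simps)

lemma sum_star_nodes_eq:
  assumes "i < k" "j < k" "i \<noteq> j"
    and "F i = A1" "F j = A2" "F (k+i) = A3" "F (k+j) = A4"
    and "\<And>z. z < k \<Longrightarrow> z \<noteq> i \<Longrightarrow> z \<noteq> j \<Longrightarrow> F z = A5"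
    and "\<And>z. z < k \<Longrightarrow> z \<noteq> i \<Longrightarrow> z \<noteq> j \<Longrightarrow> F (k+z) = A6"
  shows "(\<Sum>w \<in> nodes (2*k). F w) = A1 + A2 + A3 + A4 + (real k - 2) * (A5 + A6)"
  by (intro antisym sum_star_nodes_le[OF assms(1-3)] sum_star_nodes_ge[OF assms(1-3)]) (auto simp: assms)


(* The star network on 2k nodes: centers 0, ..., k-1 form a clique and center x carries
   the single leaf k + x. *)

definition star_adj :: "nat \<Rightarrow> nat \<Rightarrow> nat \<Rightarrow> bool" where
  "star_adj k x y \<longleftrightarrow> (x < k \<and> y < k \<and> x \<noteq> y) \<or> (x < k \<and> y = k + x) \<or> (y < k \<and> x = k + y)"

definition star_network :: "nat \<Rightarrow> (nat \<times> nat) set" where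
  "star_network k = {(x, y). star_adj k x y}"

lemma mem_star_network [simp]: "(x, y) \<in> star_network k \<longleftrightarrow> star_adj k x y"
  by (simp add: star_network_def)

lemma star_network_is_k_star:
  assumes "3 \<le> k" shows "k_star_network k (2*k) (star_network k)"
  unfolding k_star_network_def
proof (intro conjI exI[of _ "{..<k}"])
  have leaf: "\<And>x. x \<in> {..<k} \<Longrightarrow> {v \<in> nodes (2*k) - {..<k}. (x, v) \<in> star_network k} = {k + x}"
    by (auto simp: nodes_def star_adj_def)
  show "\<forall>v \<in> nodes (2*k) - {..<k}. \<exists>x \<in> {..<k}. {w. (v, w) \<in> star_network k} = {x}"
  proof
    fix v assume "v \<in> nodes (2*k) - {..<k}"
    then have "v - k < k" "{w. (v, w) \<in> star_network k} = {v - k}" by (auto simp: nodes_def star_adj_def)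
    then show "\<exists>x \<in> {..<k}. {w. (v, w) \<in> star_network k} = {x}" by blast
  qed
  show "\<forall>x \<in> {..<k}. {v \<in> nodes (2*k) - {..<k}. (x, v) \<in> star_network k} \<noteq> {}"
    "\<forall>x \<in> {..<k}. \<forall>y \<in> {..<k}. card {v \<in> nodes (2*k) - {..<k}. (x, v) \<in> star_network k}
                                \<le> card {v \<in> nodes (2*k) - {..<k}. (y, v) \<in> star_network k} + 1"
    using leaf by auto
qed (auto simp: is_network_def star_adj_def nodes_def)

lemma sym_star_network: "sym (star_network k)"
  by (auto simp: sym_def star_adj_def)

lemma sym_del_link: "sym g \<Longrightarrow> sym (del_link g i j)"
  by (auto simp: sym_def del_link_def)

lemma add_link_commute: "add_link g i j = add_link g j i"
  by (auto simp: add_link_def)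

locale star_deviations = positive_benefits +
  fixes k i j :: nat
  assumes k_ge_3: "3 \<le> k" and i_lt_k: "i < k" and j_lt_k: "j < k" and i_ne_j: "i \<noteq> j"
begin

abbreviation "G \<equiv> star_network k"
abbreviation "G_cut \<equiv> del_link (star_network k) i j"
abbreviation "G_link \<equiv> add_link (star_network k) (k+i) (k+j)"

lemma mem_G_cut [simp]: "(x, y) \<in> G_cut \<longleftrightarrow> star_adj k x y \<and> \<not> (x = i \<and> y = j) \<and> \<not> (x = j \<and> y = i)"
  by (auto simp: del_link_def)

lemma mem_G_link [simp]: "(x, y) \<in> G_link \<longleftrightarrow> star_adj k x y \<or> (x = k+i \<and> y = k+j) \<or> (x = k+j \<and> y = k+i)"
  by (auto simp: add_link_def)

lemma third_center: obtains z where "z < k" "z \<noteq> i" "z \<noteq> j"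
proof -
  have "\<exists>z \<in> {0, 1, 2::nat}. z \<noteq> i \<and> z \<noteq> j" by auto
  then obtain z :: nat where "z \<in> {0, 1, 2}" "z \<noteq> i" "z \<noteq> j" by blast
  then show ?thesis using k_ge_3 that[of z] by auto
qed

lemma leaf_nodes: "t < k \<Longrightarrow> {x. (k+t, x) \<in> G} = {t}" "t < k \<Longrightarrow> {x. (k+t, x) \<in> G_cut} = {t}"
  using i_lt_k j_lt_k by (auto simp: star_adj_def)

lemma leaf_center_essential:
  assumes "t < k" "y \<noteq> t" "y \<noteq> k+t"
  shows "t \<in> ess_set (2*k) G y (k+t)" "t \<in> ess_set (2*k) G_cut (k+t) y"
proof -
  have "t \<in> nodes (2*k)" "t \<noteq> k+t" using assms(1) by (auto simp: nodes_def)
  then show "t \<in> ess_set (2*k) G y (k+t)" "t \<in> ess_set (2*k) G_cut (k+t) y"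
    using leaf_neighbour_essential'[OF sym_star_network] leaf_neighbour_essential leaf_nodes[OF assms(1)] assms
    by auto
qed

lemma degrees:
  "degree G i = k" "degree G_cut i = k - 1" "degree G (k+i) = 1" "degree G_link (k+i) = 2"
proof -
  have "{w. (i, w) \<in> G} = insert (k+i) ({..<k} - {i})"
    "{w. (i, w) \<in> G_cut} = insert (k+i) ({..<k} - {i, j})"
    "{w. (k+i, w) \<in> G} = {i}" "{w. (k+i, w) \<in> G_link} = {i, k+j}"
    using i_lt_k j_lt_k i_ne_j by (auto simp: star_adj_def)
  then show "degree G i = k" "degree G_cut i = k - 1" "degree G (k+i) = 1" "degree G_link (k+i) = 2"
    using i_lt_k j_lt_k i_ne_j card_other_centers[OF i_lt_k j_lt_k i_ne_j] by (simp_all add: degree_def)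
qed

(* In the star, any two nodes other than i and its leaf are joined by a path avoiding i;
   hence center i only brokers pairs that contain its own leaf. *)
lemma star_path_avoiding_center:
  assumes "y < 2*k" "z < 2*k" "y \<noteq> z" "y \<notin> {i, k+i}" "z \<notin> {i, k+i}"
  shows "\<exists>p. is_path G p y z \<and> i \<notin> set p"
proof (cases "y < k"; cases "z < k")
  assume "y < k" "z < k"
  then show ?thesis using assms by (intro exI[of _ "[y, z]"]) (auto simp: is_path_Cons_Cons star_adj_def)
next
  assume "y < k" "\<not> z < k"
  then show ?thesis using assms
    by (cases "z = k + y", (intro exI[of _ "[y, z]"]; auto simp: is_path_Cons_Cons star_adj_def),
        (intro exI[of _ "[y, z-k, z]"]; auto simp: is_path_Cons_Cons star_adj_def))
next
  assume "\<not> y < k" "z < k"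
  then show ?thesis using assms
    by (cases "y = k + z", (intro exI[of _ "[y, z]"]; auto simp: is_path_Cons_Cons star_adj_def),
        (intro exI[of _ "[y, y-k, z]"]; auto simp: is_path_Cons_Cons star_adj_def))
next
  assume "\<not> y < k" "\<not> z < k"
  then show ?thesis using assms
    by (intro exI[of _ "[y, y-k, z-k, z]"]) (auto simp: is_path_Cons_Cons star_adj_def)
qed

lemma star_center_brokers_own_leaf: "(y, z) \<in> brokered_pairs (2*k) G i \<Longrightarrow> y = k+i \<or> z = k+i"
proof (rule ccontr)
  assume H: "(y, z) \<in> brokered_pairs (2*k) G i" "\<not> (y = k+i \<or> z = k+i)"
  then have h: "y < 2*k" "z < 2*k" "y < z" "essential G i y z"
    by (auto simp: brokered_pairs_def nodes_def ess_set_def)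
  then obtain p where "is_path G p y z" "i \<notin> set p"
    using star_path_avoiding_center[of y z] H(2) by (auto simp: essential_def)
  then show False using h(4) by (auto simp: essential_def)
qed


lemma star_center_far_benefit: "(\<Sum>w \<in> nodes (2*k). far_benefit b G i w) = (real k - 1) * b 2"
proof -
  note facts = i_lt_k j_lt_k i_ne_j
  have "(\<Sum>w \<in> nodes (2*k). far_benefit b G i w) = 0 + 0 + 0 + b 2 + (real k - 2) * (0 + b 2)"
  proof (rule sum_star_nodes_eq[OF facts])
    show "far_benefit b G i i = 0" by (rule far_benefit_self)
    show "far_benefit b G i j = 0" "far_benefit b G i (k+i) = 0"
      using facts by (auto intro!: far_benefit_adj simp: star_adj_def)
    show "far_benefit b G i (k+j) = b 2"
      by (rule far_benefit_2[where u = j]) (use facts in \<open>auto simp: is_path_Cons_Cons star_adj_def\<close>)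
    fix z assume z: "z < k" "z \<noteq> i" "z \<noteq> j"
    show "far_benefit b G i z = 0" using facts z by (intro far_benefit_adj) (auto simp: star_adj_def)
    show "far_benefit b G i (k+z) = b 2"
      by (rule far_benefit_2[where u = z]) (use facts z in \<open>auto simp: is_path_Cons_Cons star_adj_def\<close>)
  qed
  then show ?thesis by (simp add: algebra_simps)
qed

(* Every node at distance 2 from center i is a leaf, whose own center is essential. *)
lemma star_center_cost:
  "\<gamma> * ((real k - 1) * b 2) \<le> (\<Sum>w \<in> nodes (2*k). intermediation_cost b \<gamma> (2*k) G i w)"
proof -
  have "\<gamma> * far_benefit b G i w \<le> intermediation_cost b \<gamma> (2*k) G i w" if w: "w \<in> nodes (2*k)" for w
  proof (rule intermediation_cost_ge)
    assume far: "1 < dist G i w"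
    then have "w \<noteq> i" by auto
    with far have "\<not> star_adj k i w" using dist_adj[of i w G] by auto
    then have "w = k + (w - k)" "w - k < k" "w - k \<noteq> i"
      using w i_lt_k \<open>w \<noteq> i\<close> by (auto simp: star_adj_def nodes_def)
    then show "ess_set (2*k) G i w \<noteq> {}"
      using leaf_center_essential(1)[of "w - k" i] i_lt_k by auto
  qed
  then have "\<gamma> * (\<Sum>w \<in> nodes (2*k). far_benefit b G i w) \<le> (\<Sum>w \<in> nodes (2*k). intermediation_cost b \<gamma> (2*k) G i w)"
    unfolding sum_distrib_left by (rule sum_mono)
  then show ?thesis by (simp add: star_center_far_benefit)
qed

(* Center i brokers exactly the pairs containing its leaf: with k - 1 centers alone
   and with the k - 1 other leaves together with their centers. *)
lemma star_center_income:
  "intermediation_income b \<gamma> (2*k) G i \<le> (real k - 1) * (\<gamma> * (2 * b 2 + b 3))"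
proof -
  note facts = i_lt_k j_lt_k i_ne_j
  have "intermediation_income b \<gamma> (2*k) G i = (\<Sum>w \<in> nodes (2*k). fee b \<gamma> (2*k) G i (k+i) w)"
    by (rule intermediation_income_eq[OF sym_star_network])
      (use i_lt_k star_center_brokers_own_leaf in \<open>auto simp: nodes_def\<close>)
  also have "\<dots> \<le> 0 + \<gamma> / 1 * 2 * b 2 + 0 + \<gamma> / 2 * 2 * b 3 + (real k - 2) * (\<gamma> / 1 * 2 * b 2 + \<gamma> / 2 * 2 * b 3)"
  proof (rule sum_star_nodes_le[OF facts])
    show "fee b \<gamma> (2*k) G i (k+i) i \<le> 0" "fee b \<gamma> (2*k) G i (k+i) (k+i) \<le> 0"
      using facts by (auto simp: fee_zero ess_set_adj star_adj_def)
    have d: "dist G (k+i) j = 2"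
      by (rule dist_2[where u = i]) (use facts in \<open>auto simp: is_path_Cons_Cons star_adj_def\<close>)
    show "fee b \<gamma> (2*k) G i (k+i) j \<le> \<gamma> / 1 * 2 * b 2"
      using fee_le[where A = "{i}", OF _ _ d] by simp
    have d: "dist G (k+i) (k+j) = 3"
      by (rule dist_3[where u = i and v = j]) (use facts in \<open>auto simp: is_path_Cons_Cons star_adj_def\<close>)
    have "j \<in> ess_set (2*k) G (k+i) (k+j)" using leaf_center_essential(1)[of j "k+i"] facts by auto
    then show "fee b \<gamma> (2*k) G i (k+i) (k+j) \<le> \<gamma> / 2 * 2 * b 3"
      using fee_le[where A = "{i, j}", OF _ _ d] facts by simp
    fix z assume z: "z < k" "z \<noteq> i" "z \<noteq> j"
    have d: "dist G (k+i) z = 2"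
      by (rule dist_2[where u = i]) (use facts z in \<open>auto simp: is_path_Cons_Cons star_adj_def\<close>)
    show "fee b \<gamma> (2*k) G i (k+i) z \<le> \<gamma> / 1 * 2 * b 2"
      using fee_le[where A = "{i}", OF _ _ d] by simp
    have d: "dist G (k+i) (k+z) = 3"
      by (rule dist_3[where u = i and v = z]) (use facts z in \<open>auto simp: is_path_Cons_Cons star_adj_def\<close>)
    have "z \<in> ess_set (2*k) G (k+i) (k+z)" using leaf_center_essential(1)[of z "k+i"] facts z by auto
    then show "fee b \<gamma> (2*k) G i (k+i) (k+z) \<le> \<gamma> / 2 * 2 * b 3"
      using fee_le[where A = "{i, z}", OF _ _ d] z by simp
  qed
  also have "\<dots> = (real k - 1) * (\<gamma> * (2 * b 2 + b 3))" by (simp add: algebra_simps)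
  finally show ?thesis .
qed


(* Center i after cutting its link to j: j is now at distance 2 and its leaf at distance 3. *)

lemma cut_center_far_benefit:
  "(\<Sum>w \<in> nodes (2*k). far_benefit b G_cut i w) = (real k - 1) * b 2 + b 3"
proof -
  note facts = i_lt_k j_lt_k i_ne_j
  obtain z0 where z0: "z0 < k" "z0 \<noteq> i" "z0 \<noteq> j" by (rule third_center)
  have "(\<Sum>w \<in> nodes (2*k). far_benefit b G_cut i w) = 0 + b 2 + 0 + b 3 + (real k - 2) * (0 + b 2)"
  proof (rule sum_star_nodes_eq[OF facts])
    show "far_benefit b G_cut i i = 0" by (rule far_benefit_self)
    show "far_benefit b G_cut i j = b 2"
      by (rule far_benefit_2[where u = z0]) (use facts z0 in \<open>auto simp: is_path_Cons_Cons star_adj_def\<close>)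
    show "far_benefit b G_cut i (k+i) = 0"
      using facts by (intro far_benefit_adj) (auto simp: star_adj_def)
    show "far_benefit b G_cut i (k+j) = b 3"
      by (rule far_benefit_3[where u = z0 and v = j]) (use facts z0 in \<open>auto simp: is_path_Cons_Cons star_adj_def\<close>)
    fix z assume z: "z < k" "z \<noteq> i" "z \<noteq> j"
    show "far_benefit b G_cut i z = 0" using facts z by (intro far_benefit_adj) (auto simp: star_adj_def)
    show "far_benefit b G_cut i (k+z) = b 2"
      by (rule far_benefit_2[where u = z]) (use facts z in \<open>auto simp: is_path_Cons_Cons star_adj_def\<close>)
  qed
  then show ?thesis by (simp add: algebra_simps)
qed

(* Center i still brokers all pairs containing its leaf; the shortest paths bound the
   number of co-brokers. *)
lemma cut_center_income:
  "\<gamma> * (b 3 + 2/3 * b 4) + (real k - 2) * (\<gamma> * (2 * b 2 + b 3)) \<le> intermediation_income b \<gamma> (2*k) G_cut i"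
proof -
  note facts = i_lt_k j_lt_k i_ne_j
  obtain z0 where z0: "z0 < k" "z0 \<noteq> i" "z0 \<noteq> j" by (rule third_center)
  have "0 + \<gamma> / 2 * 2 * b 3 + 0 + \<gamma> / 3 * 2 * b 4 + (real k - 2) * (\<gamma> / 1 * 2 * b 2 + \<gamma> / 2 * 2 * b 3)
      \<le> (\<Sum>w \<in> nodes (2*k). fee b \<gamma> (2*k) G_cut i (k+i) w)"
  proof (rule sum_star_nodes_ge[OF facts])
    show "0 \<le> fee b \<gamma> (2*k) G_cut i (k+i) i" "0 \<le> fee b \<gamma> (2*k) G_cut i (k+i) (k+i)"
      by (rule fee_nonneg)+
    have p: "is_path G_cut [k+i, i, z0, j] (k+i) j"
      using facts z0 by (auto simp: is_path_Cons_Cons star_adj_def)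
    have "dist G_cut (k+i) j = 3" by (rule dist_3[OF p]) (use facts in \<open>auto simp: star_adj_def\<close>)
    then show "\<gamma> / 2 * 2 * b 3 \<le> fee b \<gamma> (2*k) G_cut i (k+i) j"
      using fee_ge[OF p _ _ leaf_center_essential(2)[of i j]] facts by simp
    have p: "is_path G_cut [k+i, i, z0, j, k+j] (k+i) (k+j)"
      using facts z0 by (auto simp: is_path_Cons_Cons star_adj_def)
    have "dist G_cut (k+i) (k+j) = 4" by (rule dist_4[OF p]) (use facts in \<open>auto simp: star_adj_def\<close>)
    then show "\<gamma> / 3 * 2 * b 4 \<le> fee b \<gamma> (2*k) G_cut i (k+i) (k+j)"
      using fee_ge[OF p _ _ leaf_center_essential(2)[of i "k+j"]] facts by simp
    fix z assume z: "z < k" "z \<noteq> i" "z \<noteq> j"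
    have p: "is_path G_cut [k+i, i, z] (k+i) z"
      using facts z by (auto simp: is_path_Cons_Cons star_adj_def)
    have "dist G_cut (k+i) z = 2" by (rule dist_2[OF p]) (use facts z in \<open>auto simp: star_adj_def\<close>)
    then show "\<gamma> / 1 * 2 * b 2 \<le> fee b \<gamma> (2*k) G_cut i (k+i) z"
      using fee_ge[OF p _ _ leaf_center_essential(2)[of i z]] facts z by simp
    have p: "is_path G_cut [k+i, i, z, k+z] (k+i) (k+z)"
      using facts z by (auto simp: is_path_Cons_Cons star_adj_def)
    have "dist G_cut (k+i) (k+z) = 3" by (rule dist_3[OF p]) (use facts z in \<open>auto simp: star_adj_def\<close>)
    then show "\<gamma> / 2 * 2 * b 3 \<le> fee b \<gamma> (2*k) G_cut i (k+i) (k+z)"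
      using fee_ge[OF p _ _ leaf_center_essential(2)[of i "k+z"]] facts z by simp
  qed
  also have "\<dots> \<le> intermediation_income b \<gamma> (2*k) G_cut i"
    by (rule intermediation_income_ge[OF sym_del_link[OF sym_star_network]]) (use i_lt_k in \<open>simp add: nodes_def\<close>)
  finally show ?thesis by (simp add: algebra_simps)
qed


(* Leaf k+i in the star: it sees all centers but its own at distance 2 and all other
   leaves at distance 3, always through its center. *)

lemma star_leaf_far_benefit:
  "(\<Sum>w \<in> nodes (2*k). far_benefit b G (k+i) w) = (real k - 1) * (b 2 + b 3)"
proof -
  note facts = i_lt_k j_lt_k i_ne_j
  have "(\<Sum>w \<in> nodes (2*k). far_benefit b G (k+i) w) = 0 + b 2 + 0 + b 3 + (real k - 2) * (b 2 + b 3)"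
  proof (rule sum_star_nodes_eq[OF facts])
    show "far_benefit b G (k+i) i = 0" using facts by (intro far_benefit_adj) (auto simp: star_adj_def)
    show "far_benefit b G (k+i) j = b 2"
      by (rule far_benefit_2[where u = i]) (use facts in \<open>auto simp: is_path_Cons_Cons star_adj_def\<close>)
    show "far_benefit b G (k+i) (k+i) = 0" by (rule far_benefit_self)
    show "far_benefit b G (k+i) (k+j) = b 3"
      by (rule far_benefit_3[where u = i and v = j]) (use facts in \<open>auto simp: is_path_Cons_Cons star_adj_def\<close>)
    fix z assume z: "z < k" "z \<noteq> i" "z \<noteq> j"
    show "far_benefit b G (k+i) z = b 2"
      by (rule far_benefit_2[where u = i]) (use facts z in \<open>auto simp: is_path_Cons_Cons star_adj_def\<close>)
    show "far_benefit b G (k+i) (k+z) = b 3"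
      by (rule far_benefit_3[where u = i and v = z]) (use facts z in \<open>auto simp: is_path_Cons_Cons star_adj_def\<close>)
  qed
  then show ?thesis by (simp add: algebra_simps)
qed

lemma star_leaf_cost:
  "(\<Sum>w \<in> nodes (2*k). intermediation_cost b \<gamma> (2*k) G (k+i) w) = \<gamma> * ((real k - 1) * (b 2 + b 3))"
proof -
  have "i \<in> nodes (2*k)" "i \<noteq> k+i" using i_lt_k by (auto simp: nodes_def)
  then have "\<And>w. intermediation_cost b \<gamma> (2*k) G (k+i) w = \<gamma> * far_benefit b G (k+i) w"
    using leaf_intermediation_cost leaf_nodes(1)[OF i_lt_k] by blast
  then show ?thesis by (simp add: sum_distrib_left[symmetric] star_leaf_far_benefit)
qed


(* Leaf k+i after linking it to leaf k+j: both centers i and j are now reachable in two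
   disjoint ways, so only the far leaves still cost intermediation. *)

lemma linked_leaf_far_benefit:
  "(\<Sum>w \<in> nodes (2*k). far_benefit b G_link (k+i) w) = (real k - 1) * b 2 + (real k - 2) * b 3"
proof -
  note facts = i_lt_k j_lt_k i_ne_j
  have "(\<Sum>w \<in> nodes (2*k). far_benefit b G_link (k+i) w) = 0 + b 2 + 0 + 0 + (real k - 2) * (b 2 + b 3)"
  proof (rule sum_star_nodes_eq[OF facts])
    show "far_benefit b G_link (k+i) i = 0" "far_benefit b G_link (k+i) (k+j) = 0"
      using facts by (auto intro!: far_benefit_adj simp: star_adj_def)
    show "far_benefit b G_link (k+i) j = b 2"
      by (rule far_benefit_2[where u = i]) (use facts in \<open>auto simp: is_path_Cons_Cons star_adj_def\<close>)
    show "far_benefit b G_link (k+i) (k+i) = 0" by (rule far_benefit_self)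
    fix z assume z: "z < k" "z \<noteq> i" "z \<noteq> j"
    show "far_benefit b G_link (k+i) z = b 2"
      by (rule far_benefit_2[where u = i]) (use facts z in \<open>auto simp: is_path_Cons_Cons star_adj_def\<close>)
    show "far_benefit b G_link (k+i) (k+z) = b 3"
      by (rule far_benefit_3[where u = i and v = z]) (use facts z in \<open>auto simp: is_path_Cons_Cons star_adj_def\<close>)
  qed
  then show ?thesis by (simp add: algebra_simps)
qed

lemma linked_leaf_cost:
  "(\<Sum>w \<in> nodes (2*k). intermediation_cost b \<gamma> (2*k) G_link (k+i) w) \<le> (real k - 2) * (\<gamma> * b 3)"
proof -
  note facts = i_lt_k j_lt_k i_ne_j
  have "(\<Sum>w \<in> nodes (2*k). intermediation_cost b \<gamma> (2*k) G_link (k+i) w)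
      \<le> 0 + 0 + 0 + 0 + (real k - 2) * (0 + \<gamma> * b 3)"
  proof (rule sum_star_nodes_le[OF facts])
    show "intermediation_cost b \<gamma> (2*k) G_link (k+i) i \<le> 0"
      "intermediation_cost b \<gamma> (2*k) G_link (k+i) (k+i) \<le> 0"
      "intermediation_cost b \<gamma> (2*k) G_link (k+i) (k+j) \<le> 0"
      using facts by (auto simp: intermediation_cost_free ess_set_adj star_adj_def)
    have "ess_set (2*k) G_link (k+i) j = {}"
      by (rule ess_set_two_paths[of _ "[k+i, i, j]" _ _ "[k+i, k+j, j]"])
        (use facts in \<open>auto simp: is_path_Cons_Cons star_adj_def\<close>)
    then show "intermediation_cost b \<gamma> (2*k) G_link (k+i) j \<le> 0" by (simp add: intermediation_cost_free)
    fix z assume z: "z < k" "z \<noteq> i" "z \<noteq> j"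
    have "ess_set (2*k) G_link (k+i) z = {}"
      by (rule ess_set_two_paths[of _ "[k+i, i, z]" _ _ "[k+i, k+j, j, z]"])
        (use facts z in \<open>auto simp: is_path_Cons_Cons star_adj_def\<close>)
    then show "intermediation_cost b \<gamma> (2*k) G_link (k+i) z \<le> 0" by (simp add: intermediation_cost_free)
    have "far_benefit b G_link (k+i) (k+z) = b 3"
      by (rule far_benefit_3[where u = i and v = z]) (use facts z in \<open>auto simp: is_path_Cons_Cons star_adj_def\<close>)
    then show "intermediation_cost b \<gamma> (2*k) G_link (k+i) (k+z) \<le> \<gamma> * b 3"
      using intermediation_cost_le[of "2*k" G_link "k+i" "k+z"] by simp
  qed
  then show ?thesis by simp
qed


lemma center_cut_loss:
  "utility b c \<gamma> (2*k) G i - utility b c \<gamma> (2*k) G_cut i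
     \<le> b 1 - c - b 3 + \<gamma> * (2 * b 2 + b 3 - 2/3 * b 4)"
proof -
  have deg: "real (degree G_cut i) = real k - 1" using degrees(2) k_ge_3 by (simp add: of_nat_diff)
  have cut: "(real k - 1) * (b 1 - c) + ((real k - 1) * b 2 + b 3) - \<gamma> * ((real k - 1) * b 2 + b 3)
      + \<gamma> * (b 3 + 2/3 * b 4) + (real k - 2) * (\<gamma> * (2 * b 2 + b 3)) \<le> utility b c \<gamma> (2*k) G_cut i"
    using utility_decomposition[of b c \<gamma> "2*k" G_cut i, unfolded deg] cut_center_far_benefit cut_center_income
      total_intermediation_cost_le[of "2*k" G_cut i "nodes (2*k)", unfolded cut_center_far_benefit]
    by linarith
  have star: "utility b c \<gamma> (2*k) G i \<le> real k * (b 1 - c) + (real k - 1) * b 2 - \<gamma> * ((real k - 1) * b 2)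
      + (real k - 1) * (\<gamma> * (2 * b 2 + b 3))"
    using utility_decomposition[of b c \<gamma> "2*k" G i, unfolded degrees(1)] star_center_far_benefit
      star_center_cost star_center_income
    by linarith
  have "real k * (b 1 - c) + (real k - 1) * b 2 - \<gamma> * ((real k - 1) * b 2) + (real k - 1) * (\<gamma> * (2 * b 2 + b 3))
      - ((real k - 1) * (b 1 - c) + ((real k - 1) * b 2 + b 3) - \<gamma> * ((real k - 1) * b 2 + b 3)
         + \<gamma> * (b 3 + 2/3 * b 4) + (real k - 2) * (\<gamma> * (2 * b 2 + b 3)))
      = b 1 - c - b 3 + \<gamma> * (2 * b 2 + b 3 - 2/3 * b 4)"
    by (simp add: algebra_simps)
  then show ?thesis using cut star by linarith
qed

lemma leaf_link_gain:
  "b 1 - c - b 3 + \<gamma> * ((real k - 1) * b 2 + b 3)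
     \<le> utility b c \<gamma> (2*k) G_link (k+i) - utility b c \<gamma> (2*k) G (k+i)"
proof -
  have link: "2 * (b 1 - c) + ((real k - 1) * b 2 + (real k - 2) * b 3) - (real k - 2) * (\<gamma> * b 3)
      \<le> utility b c \<gamma> (2*k) G_link (k+i)"
    using utility_decomposition[of b c \<gamma> "2*k" G_link "k+i", unfolded degrees(4)] linked_leaf_far_benefit
      linked_leaf_cost intermediation_income_nonneg[of "2*k" G_link "k+i"]
    by linarith
  have "intermediation_income b \<gamma> (2*k) G (k+i) = 0"
    by (rule leaf_brokers_nothing[OF sym_star_network]) (use leaf_nodes(1)[OF i_lt_k] in simp)
  then have star: "utility b c \<gamma> (2*k) G (k+i)
      = (b 1 - c) + (real k - 1) * (b 2 + b 3) - \<gamma> * ((real k - 1) * (b 2 + b 3))"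
    using utility_decomposition[of b c \<gamma> "2*k" G "k+i", unfolded degrees(3)] star_leaf_far_benefit
      star_leaf_cost
    by simp
  have "2 * (b 1 - c) + ((real k - 1) * b 2 + (real k - 2) * b 3) - (real k - 2) * (\<gamma> * b 3)
      - ((b 1 - c) + (real k - 1) * (b 2 + b 3) - \<gamma> * ((real k - 1) * (b 2 + b 3)))
      = b 1 - c - b 3 + \<gamma> * ((real k - 1) * b 2 + b 3)"
    by (simp add: algebra_simps)
  then show ?thesis using link star by linarith
qed

end

(* The final bookkeeping: the two inequalities differ by gamma ((k-3) b2 + 2/3 b4). *)
lemma gamma_zero_and_link_cost:
  fixes K b1 b2 b3 b4 c \<gamma> :: real
  assumes "3 \<le> K" "0 < b2" "0 < b4" "0 \<le> \<gamma>"
    and cut: "0 \<le> b1 - c - b3 + \<gamma> * (2 * b2 + b3 - 2/3 * b4)"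
    and link: "b1 - c - b3 + \<gamma> * ((K - 1) * b2 + b3) \<le> 0"
  shows "\<gamma> = 0 \<and> c = b1 - b3"
proof -
  have "\<gamma> * ((K - 3) * b2 + 2/3 * b4) = (b1 - c - b3 + \<gamma> * ((K - 1) * b2 + b3))
      - (b1 - c - b3 + \<gamma> * (2 * b2 + b3 - 2/3 * b4))"
    by (simp add: algebra_simps)
  then have "\<gamma> * ((K - 3) * b2 + 2/3 * b4) \<le> 0"
    using cut link by linarith
  moreover have "0 < (K - 3) * b2 + 2/3 * b4"
    using assms(1-3) by (simp add: add_nonneg_pos)
  ultimately have "\<gamma> = 0"
    using assms(4) by (simp add: mult_le_0_iff)
  then show ?thesis using cut link by simp
qed

lemma stable_star_inequalities:
  assumes "positive_benefits b \<gamma>" "3 \<le> k" and stable: "pairwise_stable b c \<gamma> (2*k) (star_network k)"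
  shows "0 \<le> b 1 - c - b 3 + \<gamma> * (2 * b 2 + b 3 - 2/3 * b 4)"
    and "b 1 - c - b 3 + \<gamma> * ((real k - 1) * b 2 + b 3) \<le> 0"
proof -
  interpret D01: star_deviations b \<gamma> k 0 1 using assms(1,2) by (simp add: star_deviations_def star_deviations_axioms_def)
  interpret D10: star_deviations b \<gamma> k 1 0 using assms(1,2) by (simp add: star_deviations_def star_deviations_axioms_def)
  have "utility b c \<gamma> (2*k) (del_link (star_network k) 0 1) 0 \<le> utility b c \<gamma> (2*k) (star_network k) 0"
    using stable assms(2) unfolding pairwise_stable_def by (auto simp: star_adj_def)
  then show "0 \<le> b 1 - c - b 3 + \<gamma> * (2 * b 2 + b 3 - 2/3 * b 4)"
    using D01.center_cut_loss[of c] by linarith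
  show "b 1 - c - b 3 + \<gamma> * ((real k - 1) * b 2 + b 3) \<le> 0"
  proof (rule ccontr)
    let ?G' = "add_link (star_network k) k (k+1)"
    have nodes: "k \<in> nodes (2*k)" "k+1 \<in> nodes (2*k)" "k \<noteq> k+1 \<and> (k, k+1) \<notin> star_network k"
      using assms(2) by (auto simp: nodes_def star_adj_def)
    assume "\<not> ?thesis"
    then have "utility b c \<gamma> (2*k) (star_network k) k < utility b c \<gamma> (2*k) ?G' k"
      "utility b c \<gamma> (2*k) (star_network k) (k+1) < utility b c \<gamma> (2*k) ?G' (k+1)"
      using D01.leaf_link_gain[of c, unfolded add_0_right]
        D10.leaf_link_gain[of c, unfolded add_0_right add_link_commute[of _ "k+1" k]]
      by linarith+
    then show False
      using conjunct2[OF stable[unfolded pairwise_stable_def], rule_format, OF nodes] by linarith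
  qed
qed

theorem lemma1:
  fixes k :: nat and b :: "nat \<Rightarrow> real" and c \<gamma> :: real
  assumes "k \<ge> 3"
    and "\<forall>i \<ge> 1. b i > b (Suc i)"
    and "\<forall>i \<ge> 1. b i > 0"
    and "0 \<le> \<gamma>" and "\<gamma> < 1"
    and "\<forall>n g. n \<ge> 2 * k \<longrightarrow> k_star_network k n g \<longrightarrow> pairwise_stable b c \<gamma> n g"
  shows "\<gamma> = 0 \<and> c = b 1 - b 3"
proof -
  have "positive_benefits b \<gamma>" using assms(3,4) by unfold_locales auto
  moreover have "pairwise_stable b c \<gamma> (2*k) (star_network k)"
    using assms(6) star_network_is_k_star[OF assms(1)] by auto
  ultimately have cut: "0 \<le> b 1 - c - b 3 + \<gamma> * (2 * b 2 + b 3 - 2/3 * b 4)"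
    and link: "b 1 - c - b 3 + \<gamma> * ((real k - 1) * b 2 + b 3) \<le> 0"
    using stable_star_inequalities[OF _ assms(1)] by blast+
  show ?thesis
    by (rule gamma_zero_and_link_cost[OF _ _ _ assms(4) cut link]) (use assms(1,3) in auto)
qed

end
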